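(* Let $A\in\mathbb R^{m\times n}$ and for each $t$ let $\mathcal A_t=\{\mathbf u\in\mathbb R^n: A\mathbf u\ge 0\}$ (componentwise), with negative cone $-\mathcal A_t=\{-\mathbf u:\mathbf u\in\mathcal A_t\}$. Define recursively, backward in $t=T-1,\dots,0$, starting from $a_T^\pm=b_T^\pm=0$: $\widetilde{\mathbf K}_t^+\in\arg\min_{\mathbf K\in\mathcal A_t}F_t^+(\mathbf K)$, $\widetilde{\mathbf K}_t^-\in\arg\min_{\mathbf K\in-\mathcal A_t}F_t^-(\mathbf K)$ (with $F_t^\pm$ built from $a_{t+1}^\pm,b_{t+1}^\pm$), and with $Z_t^\pm=s_t+\mathbf P_t'\widetilde{\mathbf K}_t^\pm$, $a_t^+=\rho_{t+1}\mathbb E[\mathbf P_t]'\widetilde{\mathbf K}_t^++\mathbb E[a_{t+1}^+Z_t^+1_{\{Z_t^+\ge0\}}]+\mathbb E[a_{t+1}^-Z_t^+1_{\{Z_t^+<0\}}]$, $a_t^-=\rho_{t+1}\mathbb E[\mathbf P_t]'\widetilde{\mathbf K}_t^-+\mathbb E[a_{t+1}^+Z_t^-1_{\{Z_t^-\le0\}}]+\mathbb E[a_{t+1}^-Z_t^-1_{\{Z_t^->0\}}]$, $b_t^+=\rho_{t+1}^2(\widetilde{\mathbf K}_t^+)'\mathbb E[\mathbf P_t\mathbf P_t']\widetilde{\mathbf K}_t^++2\rho_{t+1}\mathbb E[a_{t+1}^+Z_t^+\mathbf P_t'\widetilde{\mathbf K}_t^+1_{\{Z_t^+\ge0\}}]+2\rho_{t+1}\mathbb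 E[a_{t+1}^-Z_t^+\mathbf P_t'\widetilde{\mathbf K}_t^+1_{\{Z_t^+<0\}}]+\mathbb E[b_{t+1}^+(Z_t^+)^21_{\{Z_t^+\ge0\}}]+\mathbb E[b_{t+1}^-(Z_t^+)^21_{\{Z_t^+<0\}}]$, $b_t^-=\rho_{t+1}^2(\widetilde{\mathbf K}_t^-)'\mathbb E[\mathbf P_t\mathbf P_t']\widetilde{\mathbf K}_t^-+2\rho_{t+1}\mathbb E[a_{t+1}^+Z_t^-\mathbf P_t'\widetilde{\mathbf K}_t^-1_{\{Z_t^-\le0\}}]+2\rho_{t+1}\mathbb E[a_{t+1}^-Z_t^-\mathbf P_t'\widetilde{\mathbf K}_t^-1_{\{Z_t^->0\}}]+\mathbb E[b_{t+1}^+(Z_t^-)^21_{\{Z_t^-\le0\}}]+\mathbb E[b_{t+1}^-(Z_t^-)^21_{\{Z_t^->0\}}]$. Then the time consistent behavioral portfolio policy of the cone-constrained nested mean-variance problem is, for $t=0,\dots,T-1$, $$\mathbf u_t^{TC}=\widetilde{\mathbf K}_t^+(X_t-\rho_t^{-1}W)1_{\{X_t\ge\rho_t^{-1}W\}}+\widetilde{\mathbf K}_t^-(X_t-\rho_t^{-1}W)1_{\{X_t<\rho_t^{-1}W\}}.$$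
   Context: Market: $T$ periods, one risk-free asset with deterministic gross return $s_t>1$ in period $t$, and $n$ risky assets with random gross return vector $\mathbf e_t$ in period $t$. The excess return vector is $\mathbf P_t=\mathbf e_t-s_t\mathbf 1\in\mathbb R^n$. The vectors $\mathbf P_0,\dots,\mathbf P_{T-1}$ are statistically independent, absolutely continuous, with finite first and second moments, and each covariance matrix $\mathrm{Cov}(\mathbf P_t)=\mathbb E[\mathbf P_t\mathbf P_t']-\mathbb E[\mathbf P_t]\mathbb E[\mathbf P_t]'$ is positive definite. The market is arbitrage-free; in particular, for every nonzero $\mathbf L\in\mathbb R^n$, neither $\mathbf P_t'\mathbf L\le 0$ a.s. nor $\mathbf P_t'\mathbf L\ge 0$ a.s. holds. Write $\rho_t=\prod_{j=t}^{T-1}s_j$ for $t<T$ and $\rho_T=1$. Wealth dynamics: $X_{t+1}=s_tX_t+\mathbf P_t'\mathbf u_t$, where $\mathbf u_t$ is a Markov feedback policy (deterministic function of $X_t$). An investment target $W\in\mathbb R$ is fixed. Behavioral risk aversion: for constants $\gamma_t^+,\gamma_t^-\ge0$, $\gamma_t(X_t)=\gamma_t^+(X_t-\rho_t^{-1}W)$ if $X_t\ge\rho_t^{-1}W$ and $\gamma_t(X_t)=-\gamma_t^-(X_t-\rho_t^{-1}W)$ if $X_t<\rho_t^{-1}W$. Cone-constrained time consistent policy: a Markov policy $(\mathbf u_0^{TC},\dots,\mathbf u_{T-1}^{TC})$ with $\mathbf u_t^{TC}(x)\in\mathcal A_t$ for all $x$ is time consistent if for every $t$ and every wealth level $X_t$,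 $\mathbf u_t^{TC}(X_t)$ minimizes over $\mathbf u_t\in\mathcal A_t$ the objective $\mathrm{Var}(X_T\mid X_t)-\gamma_t(X_t)\mathbb E[X_T\mid X_t]$, where $X_{t+1}=s_tX_t+\mathbf P_t'\mathbf u_t$ and $X_{j+1}=s_jX_j+\mathbf P_j'\mathbf u_j^{TC}(X_j)$ for $j=t+1,\dots,T-1$. Definition of $F_t^\pm:\mathbb R^n\to\mathbb R$, given deterministic numbers $a_{t+1}^\pm,b_{t+1}^\pm,\gamma_t^\pm$, writing $Z=s_t+\mathbf P_t'\mathbf K$: $$F_t^+(\mathbf K)=\rho_{t+1}^2\mathbf K'\mathrm{Cov}(\mathbf P_t)\mathbf K+\mathbb E\big[(2\rho_{t+1}a_{t+1}^++b_{t+1}^+)Z^21_{\{Z\ge0\}}\big]+\mathbb E\big[(2\rho_{t+1}a_{t+1}^-+b_{t+1}^-)Z^21_{\{Z<0\}}\big]-M_+^2-2\rho_{t+1}M_+\,(s_t+\mathbb E[\mathbf P_t]'\mathbf K)-\gamma_t^+M_+-\rho_{t+1}\gamma_t^+(s_t+\mathbb E[\mathbf P_t]'\mathbf K),$$ where $M_+=\mathbb E[a_{t+1}^+Z1_{\{Z\ge0\}}]+\mathbb E[a_{t+1}^-Z1_{\{Z<0\}}]$; and $$F_t^-(\mathbf K)=\rho_{t+1}^2\mathbf K'\mathrm{Cov}(\mathbf P_t)\mathbf K+\mathbb E\big[(2\rho_{t+1}a_{t+1}^++b_{t+1}^+)Z^21_{\{Z\le0\}}\big]+\mathbb E\big[(2\rho_{t+1}a_{t+1}^-+b_{t+1}^-)Z^21_{\{Z>0\}}\big]-M_-^2-2\rho_{t+1}M_-\,(s_t+\mathbb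 E[\mathbf P_t]'\mathbf K)+\gamma_t^-M_-+\rho_{t+1}\gamma_t^-(s_t+\mathbb E[\mathbf P_t]'\mathbf K),$$ where $M_-=\mathbb E[a_{t+1}^+Z1_{\{Z\le0\}}]+\mathbb E[a_{t+1}^-Z1_{\{Z>0\}}]$. *)

theory Defs
  imports "HOL-Probability.Probability"
begin

definition rho :: "(nat \<Rightarrow> real) \<Rightarrow> nat \<Rightarrow> nat \<Rightarrow> real" where
  "rho s T t = (\<Prod>j\<in>{t..<T}. s j)"

definition cone :: "real^'n^'m \<Rightarrow> (real^'n) set" where
  "cone A = {u. \<forall>i. (A *v u) $ i \<ge> 0}"

definition mean_vec :: "'a measure \<Rightarrow> ('a \<Rightarrow> real^'n) \<Rightarrow> real^'n" where
  "mean_vec M X = (\<chi> i. \<integral>\<omega>. X \<omega> $ i \<partial>M)"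

definition second_moment :: "'a measure \<Rightarrow> ('a \<Rightarrow> real^'n) \<Rightarrow> real^'n^'n" where
  "second_moment M X = (\<chi> i j. \<integral>\<omega>. X \<omega> $ i * X \<omega> $ j \<partial>M)"

definition cov_mat :: "'a measure \<Rightarrow> ('a \<Rightarrow> real^'n) \<Rightarrow> real^'n^'n" where
  "cov_mat M X = (\<chi> i j. (\<integral>\<omega>. X \<omega> $ i * X \<omega> $ j \<partial>M)
                          - (\<integral>\<omega>. X \<omega> $ i \<partial>M) * (\<integral>\<omega>. X \<omega> $ j \<partial>M))"

definition F_plus :: "'a measure \<Rightarrow> (nat \<Rightarrow> 'a \<Rightarrow> real^'n) \<Rightarrow> (nat \<Rightarrow> real) \<Rightarrow> nat \<Rightarrow>
    (nat \<Rightarrow> real) \<Rightarrow> (nat \<Rightarrow> real) \<Rightarrow> (nat \<Rightarrow> real) \<Rightarrow> (nat \<Rightarrow> real) \<Rightarrow> (nat \<Rightarrow> real) \<Rightarrow>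
    nat \<Rightarrow> real^'n \<Rightarrow> real" where
  "F_plus M P s T ap am bp bm gp t K =
    (let r = rho s T (Suc t);
         Z = (\<lambda>\<omega>. s t + P t \<omega> \<bullet> K);
         Mp = (\<integral>\<omega>. ap (Suc t) * Z \<omega> * (if Z \<omega> \<ge> 0 then 1 else 0) \<partial>M)
            + (\<integral>\<omega>. am (Suc t) * Z \<omega> * (if Z \<omega> < 0 then 1 else 0) \<partial>M);
         mZ = s t + mean_vec M (P t) \<bullet> K
     in r\<^sup>2 * (K \<bullet> (cov_mat M (P t) *v K))
        + (\<integral>\<omega>. (2 * r * ap (Suc t) + bp (Suc t)) * (Z \<omega>)\<^sup>2 * (if Z \<omega> \<ge> 0 then 1 else 0) \<partial>M)
        + (\<integral>\<omega>. (2 * r * am (Suc t) + bm (Suc t)) * (Z \<omega>)\<^sup>2 * (if Z \<omega> < 0 then 1 else 0) \<partial>M)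
        - Mp\<^sup>2 - 2 * r * Mp * mZ - gp t * Mp - r * gp t * mZ)"

definition F_minus :: "'a measure \<Rightarrow> (nat \<Rightarrow> 'a \<Rightarrow> real^'n) \<Rightarrow> (nat \<Rightarrow> real) \<Rightarrow> nat \<Rightarrow>
    (nat \<Rightarrow> real) \<Rightarrow> (nat \<Rightarrow> real) \<Rightarrow> (nat \<Rightarrow> real) \<Rightarrow> (nat \<Rightarrow> real) \<Rightarrow> (nat \<Rightarrow> real) \<Rightarrow>
    nat \<Rightarrow> real^'n \<Rightarrow> real" where
  "F_minus M P s T ap am bp bm gm t K =
    (let r = rho s T (Suc t);
         Z = (\<lambda>\<omega>. s t + P t \<omega> \<bullet> K);
         Mm = (\<integral>\<omega>. ap (Suc t) * Z \<omega> * (if Z \<omega> \<le> 0 then 1 else 0) \<partial>M)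
            + (\<integral>\<omega>. am (Suc t) * Z \<omega> * (if Z \<omega> > 0 then 1 else 0) \<partial>M);
         mZ = s t + mean_vec M (P t) \<bullet> K
     in r\<^sup>2 * (K \<bullet> (cov_mat M (P t) *v K))
        + (\<integral>\<omega>. (2 * r * ap (Suc t) + bp (Suc t)) * (Z \<omega>)\<^sup>2 * (if Z \<omega> \<le> 0 then 1 else 0) \<partial>M)
        + (\<integral>\<omega>. (2 * r * am (Suc t) + bm (Suc t)) * (Z \<omega>)\<^sup>2 * (if Z \<omega> > 0 then 1 else 0) \<partial>M)
        - Mm\<^sup>2 - 2 * r * Mm * mZ + gm t * Mm + r * gm t * mZ)"

definition gamma_fun :: "(nat \<Rightarrow> real) \<Rightarrow> nat \<Rightarrow> (nat \<Rightarrow> real) \<Rightarrow> (nat \<Rightarrow> real) \<Rightarrow> real \<Rightarrow> nat \<Rightarrow> real \<Rightarrow> real" where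
  "gamma_fun s T gp gm W t x =
    (if x \<ge> W / rho s T t then gp t * (x - W / rho s T t) else - gm t * (x - W / rho s T t))"

fun wealth_run :: "(nat \<Rightarrow> real) \<Rightarrow> (nat \<Rightarrow> 'a \<Rightarrow> real^'n) \<Rightarrow> (nat \<Rightarrow> real \<Rightarrow> real^'n) \<Rightarrow>
    nat \<Rightarrow> nat \<Rightarrow> real \<Rightarrow> 'a \<Rightarrow> real" where
  "wealth_run s P u j 0 y \<omega> = y"
| "wealth_run s P u j (Suc k) y \<omega> = wealth_run s P u (Suc j) k (s j * y + P j \<omega> \<bullet> u j y) \<omega>"

definition terminal_wealth :: "(nat \<Rightarrow> real) \<Rightarrow> (nat \<Rightarrow> 'a \<Rightarrow> real^'n) \<Rightarrow> (nat \<Rightarrow> real \<Rightarrow> real^'n) \<Rightarrow>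
    nat \<Rightarrow> nat \<Rightarrow> real \<Rightarrow> real^'n \<Rightarrow> 'a \<Rightarrow> real" where
  "terminal_wealth s P u T t x v \<omega> =
     wealth_run s P u (Suc t) (T - Suc t) (s t * x + P t \<omega> \<bullet> v) \<omega>"

text \<open>Objective Var(X_T | X_t = x) - gamma_t(x) E[X_T | X_t = x].\<close>
definition tc_objective :: "'a measure \<Rightarrow> (nat \<Rightarrow> 'a \<Rightarrow> real^'n) \<Rightarrow> (nat \<Rightarrow> real) \<Rightarrow> nat \<Rightarrow>
    (nat \<Rightarrow> real) \<Rightarrow> (nat \<Rightarrow> real) \<Rightarrow> real \<Rightarrow> (nat \<Rightarrow> real \<Rightarrow> real^'n) \<Rightarrow>
    nat \<Rightarrow> real \<Rightarrow> real^'n \<Rightarrow> real" where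
  "tc_objective M P s T gp gm W u t x v =
    (let XT = terminal_wealth s P u T t x v
     in (\<integral>\<omega>. (XT \<omega> - (\<integral>\<omega>'. XT \<omega>' \<partial>M))\<^sup>2 \<partial>M)
        - gamma_fun s T gp gm W t x * (\<integral>\<omega>. XT \<omega> \<partial>M))"

text \<open>Cone-constrained time consistent Markov policy (same cone A_t = cone A for all t).\<close>
definition time_consistent :: "'a measure \<Rightarrow> (nat \<Rightarrow> 'a \<Rightarrow> real^'n) \<Rightarrow> (nat \<Rightarrow> real) \<Rightarrow> nat \<Rightarrow>
    real^'n^'m \<Rightarrow> (nat \<Rightarrow> real) \<Rightarrow> (nat \<Rightarrow> real) \<Rightarrow> real \<Rightarrow> (nat \<Rightarrow> real \<Rightarrow> real^'n) \<Rightarrow> bool" where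
  "time_consistent M P s T A gp gm W u \<longleftrightarrow>
    (\<forall>t<T. \<forall>x. u t x \<in> cone A \<and>
       (\<forall>v\<in>cone A. tc_objective M P s T gp gm W u t x (u t x)
                   \<le> tc_objective M P s T gp gm W u t x v))"

end

theory Submission
  imports Defs
begin

text \<open>Under the proposed policy the deviation X_t - W / rho_t of wealth from its discounted target is
multiplied in period t by the factor s_t + P_t'K, where K is K_t^+ or K_t^- according to the sign of
the current deviation. The terminal deviation X_T - W is therefore the current deviation times a
product of such factors, and by independence of the returns the first two moments of this product
are rho_t + a_t and rho_t^2 + 2 rho_t a_t + b_t: this is exactly what the backward recursions for a
and b encode. Hence the time-t objective of the control (x - W / rho_t) K is
(x - W / rho_t)^2 F_t^{+-}(K) plus a term independent of K, and since A_t is a cone, minimising the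
objective over A_t amounts to minimising F_t^+ over A_t, respectively F_t^- over -A_t.\<close>

lemma rho_Suc: "t < T \<Longrightarrow> rho s T t = s t * rho s T (Suc t)"
  unfolding rho_def by (simp add: prod.atLeast_Suc_lessThan)

lemma rho_horizon [simp]: "rho s T T = 1"
  unfolding rho_def by simp

lemma scaleR_mem_cone: "0 \<le> c \<Longrightarrow> u \<in> cone A \<Longrightarrow> c *\<^sub>R u \<in> cone A"
  unfolding cone_def by (simp add: matrix_vector_mult_scaleR)

lemma scaleR_mem_neg_cone: "c \<le> 0 \<Longrightarrow> u \<in> cone A \<Longrightarrow> c *\<^sub>R u \<in> uminus ` cone A"
  using scaleR_mem_cone[of "- c" u A] by (auto intro!: image_eqI[where x = "(- c) *\<^sub>R u"])

lemma scaleR_neg_cone_mem: "c \<le> 0 \<Longrightarrow> u \<in> uminus ` cone A \<Longrightarrow> c *\<^sub>R u \<in> cone A"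
  using scaleR_mem_cone[of "- c" _ A] by auto

lemma scaled_minimizer:
  fixes g F :: "'v::real_vector \<Rightarrow> real"
  assumes "y \<noteq> 0" and "K0 \<in> D" and "\<And>K. K \<in> D \<Longrightarrow> F K0 \<le> F K"
    and scaling: "\<And>K. K \<in> D \<Longrightarrow> g (y *\<^sub>R K) = y\<^sup>2 * F K + d"
    and "(1 / y) *\<^sub>R v \<in> D"
  shows "g (y *\<^sub>R K0) \<le> g v"
proof -
  have "g v = y\<^sup>2 * F ((1 / y) *\<^sub>R v) + d"
    using scaling[OF \<open>(1 / y) *\<^sub>R v \<in> D\<close>] \<open>y \<noteq> 0\<close> by simp
  then show ?thesis
    using scaling[OF \<open>K0 \<in> D\<close>] assms(3,5) by (simp add: mult_left_mono)
qed

lemma inner_square_eq_double_sum: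
  fixes x K :: "real^'n"
  shows "(x \<bullet> K)\<^sup>2 = (\<Sum>i\<in>UNIV. \<Sum>j\<in>UNIV. (x $ i * x $ j) * (K $ i * K $ j))"
  unfolding inner_vec_def power2_eq_square sum_product by (simp add: algebra_simps)

lemma cov_mat_quadratic_form:
  "K \<bullet> (cov_mat M X *v K) = K \<bullet> (second_moment M X *v K) - (mean_vec M X \<bullet> K)\<^sup>2"
  unfolding cov_mat_def second_moment_def mean_vec_def inner_vec_def matrix_vector_mult_def power2_eq_square
  by (simp add: sum_distrib_left sum_product sum_subtractf[symmetric] algebra_simps)

lemma integrable_mult_if:
  fixes f :: "'a \<Rightarrow> real"
  assumes f: "integrable M f" and B [measurable]: "Measurable.pred M B"
  shows "integrable M (\<lambda>\<omega>. f \<omega> * (if B \<omega> then 1 else 0))"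
proof (rule Bochner_Integration.integrable_bound[OF f])
  have [measurable]: "f \<in> borel_measurable M"
    using f by (rule borel_measurable_integrable)
  show "(\<lambda>\<omega>. f \<omega> * (if B \<omega> then 1 else 0)) \<in> borel_measurable M"
    by measurable
qed auto

lemma integral_split_if:
  fixes f :: "'a \<Rightarrow> real"
  assumes f: "integrable M f" and B: "Measurable.pred M B"
  shows "(\<integral>\<omega>. f \<omega> * (if B \<omega> then 1 else 0) \<partial>M) + (\<integral>\<omega>. f \<omega> * (if \<not> B \<omega> then 1 else 0) \<partial>M)
    = (\<integral>\<omega>. f \<omega> \<partial>M)"
proof -
  have "Measurable.pred M (\<lambda>\<omega>. \<not> B \<omega>)"
    using B by measurable
  then have "(\<integral>\<omega>. f \<omega> * (if B \<omega> then 1 else 0) \<partial>M) + (\<integral>\<omega>. f \<omega> * (if \<not> B \<omega> then 1 else 0) \<partial>M)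
      = (\<integral>\<omega>. f \<omega> * (if B \<omega> then 1 else 0) + f \<omega> * (if \<not> B \<omega> then 1 else 0) \<partial>M)"
    using integrable_mult_if[OF f B] integrable_mult_if[OF f] by simp
  also have "\<dots> = (\<integral>\<omega>. f \<omega> \<partial>M)"
    by (rule Bochner_Integration.integral_cong) auto
  finally show ?thesis .
qed

text \<open>A deviation on side sg (True: nonnegative) is still nonnegative after multiplication by z iff
above_after sg z. A zero deviation gets side True, which is harmless since the policy then invests
nothing.\<close>

definition above_after :: "bool \<Rightarrow> real \<Rightarrow> bool" where
  "above_after sg z \<longleftrightarrow> (if sg then 0 \<le> z else z \<le> 0)"

lemma measurable_above_after [measurable]: "Measurable.pred borel (above_after sg)"
  unfolding above_after_def by (cases sg) simp_all

lemma nonneg_mult_iff_above_after: "y \<noteq> 0 \<Longrightarrow> 0 \<le> y * z \<longleftrightarrow> above_after (0 < y) z"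
  unfolding above_after_def by (auto simp: zero_le_mult_iff)

section \<open>Moments of the excess returns\<close>

locale excess_returns = prob_space M
  for M :: "'a measure" +
  fixes P :: "nat \<Rightarrow> 'a \<Rightarrow> real^'n" and T :: nat
  assumes measurable_returns [measurable]: "\<And>t. t < T \<Longrightarrow> P t \<in> borel_measurable M"
    and independent_returns: "indep_vars (\<lambda>_. borel) P {..<T}"
    and square_integrable_returns: "\<And>t i. t < T \<Longrightarrow> integrable M (\<lambda>\<omega>. (P t \<omega> $ i)\<^sup>2)"
begin

lemma measurable_return_component [measurable]: "t < T \<Longrightarrow> (\<lambda>\<omega>. P t \<omega> $ i) \<in> borel_measurable M"
  by (rule measurable_compose[OF measurable_returns borel_measurable_nth])

lemma integrable_return_product:
  assumes t: "t < T"
  shows "integrable M (\<lambda>\<omega>. P t \<omega> $ i * P t \<omega> $ j)"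
proof (rule Bochner_Integration.integrable_bound)
  show "integrable M (\<lambda>\<omega>. (P t \<omega> $ i)\<^sup>2 + (P t \<omega> $ j)\<^sup>2)"
    using square_integrable_returns[OF t] by simp
  show "(\<lambda>\<omega>. P t \<omega> $ i * P t \<omega> $ j) \<in> borel_measurable M"
    using t by measurable
  have "\<bar>x * y\<bar> \<le> x\<^sup>2 + y\<^sup>2" for x y :: real
  proof -
    have "2 * \<bar>x\<bar> * \<bar>y\<bar> \<le> x\<^sup>2 + y\<^sup>2"
      using sum_squares_bound[of "\<bar>x\<bar>" "\<bar>y\<bar>"] by simp
    moreover have "0 \<le> \<bar>x\<bar> * \<bar>y\<bar>"
      by simp
    ultimately show ?thesis
      unfolding abs_mult by linarith
  qed
  then show "AE \<omega> in M. norm (P t \<omega> $ i * P t \<omega> $ j) \<le> norm ((P t \<omega> $ i)\<^sup>2 + (P t \<omega> $ j)\<^sup>2)"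
    by simp
qed

lemma integrable_return_component: "t < T \<Longrightarrow> integrable M (\<lambda>\<omega>. P t \<omega> $ i)"
  by (rule square_integrable_imp_integrable[OF _ square_integrable_returns]) measurable

lemma integrable_inner_return: "t < T \<Longrightarrow> integrable M (\<lambda>\<omega>. P t \<omega> \<bullet> K)"
  unfolding inner_vec_def using integrable_return_component by simp

lemma integral_inner_return: "t < T \<Longrightarrow> (\<integral>\<omega>. P t \<omega> \<bullet> K \<partial>M) = mean_vec M (P t) \<bullet> K"
  unfolding inner_vec_def mean_vec_def using integrable_return_component by (simp add: integral_sum)

lemma integrable_inner_return_square: "t < T \<Longrightarrow> integrable M (\<lambda>\<omega>. (P t \<omega> \<bullet> K)\<^sup>2)"
  unfolding inner_square_eq_double_sum using integrable_return_product by simp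

lemma integral_inner_return_square:
  assumes t: "t < T"
  shows "(\<integral>\<omega>. (P t \<omega> \<bullet> K)\<^sup>2 \<partial>M) = K \<bullet> (second_moment M (P t) *v K)"
proof -
  have "(\<integral>\<omega>. (P t \<omega> \<bullet> K)\<^sup>2 \<partial>M)
      = (\<Sum>i\<in>UNIV. \<Sum>j\<in>UNIV. (\<integral>\<omega>. P t \<omega> $ i * P t \<omega> $ j \<partial>M) * (K $ i * K $ j))"
    unfolding inner_square_eq_double_sum using integrable_return_product[OF t] by (simp add: integral_sum)
  also have "\<dots> = K \<bullet> (second_moment M (P t) *v K)"
    unfolding second_moment_def inner_vec_def matrix_vector_mult_def
    by (simp add: sum_distrib_left algebra_simps)
  finally show ?thesis .
qed

lemma integrable_affine_return: "t < T \<Longrightarrow> integrable M (\<lambda>\<omega>. c + P t \<omega> \<bullet> K)"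
  using integrable_inner_return by simp

lemma integral_affine_return:
  "t < T \<Longrightarrow> (\<integral>\<omega>. c + P t \<omega> \<bullet> K \<partial>M) = c + mean_vec M (P t) \<bullet> K"
  using integrable_inner_return integral_inner_return by (simp add: prob_space)

lemma integrable_affine_return_square: "t < T \<Longrightarrow> integrable M (\<lambda>\<omega>. (c + P t \<omega> \<bullet> K)\<^sup>2)"
  unfolding power2_sum using integrable_inner_return integrable_inner_return_square by simp

lemma integral_affine_return_square:
  "t < T \<Longrightarrow> (\<integral>\<omega>. (c + P t \<omega> \<bullet> K)\<^sup>2 \<partial>M)
    = c\<^sup>2 + 2 * c * (mean_vec M (P t) \<bullet> K) + K \<bullet> (second_moment M (P t) *v K)"
  unfolding power2_sum
  using integrable_inner_return integrable_inner_return_square integral_inner_return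
    integral_inner_return_square
  by (simp add: prob_space)

lemma integral_mult_independent_future:
  fixes f :: "real^'n \<Rightarrow> real" and g :: "(nat \<Rightarrow> real^'n) \<Rightarrow> real"
  assumes t: "t < T" and f: "f \<in> borel_measurable borel"
    and g: "g \<in> borel_measurable (PiM {Suc t..<T} (\<lambda>_. borel))"
    and int_f: "integrable M (\<lambda>\<omega>. f (P t \<omega>))"
    and int_g: "integrable M (\<lambda>\<omega>. g (restrict (\<lambda>i. P i \<omega>) {Suc t..<T}))"
  shows "integrable M (\<lambda>\<omega>. f (P t \<omega>) * g (restrict (\<lambda>i. P i \<omega>) {Suc t..<T}))"
    and "(\<integral>\<omega>. f (P t \<omega>) * g (restrict (\<lambda>i. P i \<omega>) {Suc t..<T}) \<partial>M)
      = (\<integral>\<omega>. f (P t \<omega>) \<partial>M) * (\<integral>\<omega>. g (restrict (\<lambda>i. P i \<omega>) {Suc t..<T}) \<partial>M)"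
proof -
  have "indep_var (PiM {t} (\<lambda>_. borel)) (\<lambda>\<omega>. restrict (\<lambda>i. P i \<omega>) {t})
      (PiM {Suc t..<T} (\<lambda>_. borel)) (\<lambda>\<omega>. restrict (\<lambda>i. P i \<omega>) {Suc t..<T})"
    using t by (intro indep_var_restrict[OF independent_returns]) auto
  moreover have "(\<lambda>r. f (r t)) \<in> borel_measurable (PiM {t} (\<lambda>_. borel))"
    using measurable_compose[OF measurable_component_singleton[of t "{t}"] f] by simp
  ultimately have "indep_var borel ((\<lambda>r. f (r t)) \<circ> (\<lambda>\<omega>. restrict (\<lambda>i. P i \<omega>) {t}))
      borel (g \<circ> (\<lambda>\<omega>. restrict (\<lambda>i. P i \<omega>) {Suc t..<T}))"
    using g by (intro indep_var_compose)
  then have indep: "indep_var borel (\<lambda>\<omega>. f (P t \<omega>)) borel (\<lambda>\<omega>. g (restrict (\<lambda>i. P i \<omega>) {Suc t..<T}))"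
    by (simp add: comp_def)
  show "integrable M (\<lambda>\<omega>. f (P t \<omega>) * g (restrict (\<lambda>i. P i \<omega>) {Suc t..<T}))"
    by (rule indep_var_integrable[OF indep int_f int_g])
  show "(\<integral>\<omega>. f (P t \<omega>) * g (restrict (\<lambda>i. P i \<omega>) {Suc t..<T}) \<partial>M)
      = (\<integral>\<omega>. f (P t \<omega>) \<partial>M) * (\<integral>\<omega>. g (restrict (\<lambda>i. P i \<omega>) {Suc t..<T}) \<partial>M)"
    by (rule indep_var_lebesgue_integral[OF indep int_f int_g])
qed

definition trunc_mean :: "(real \<Rightarrow> bool) \<Rightarrow> nat \<Rightarrow> real \<Rightarrow> real^'n \<Rightarrow> real" where
  "trunc_mean B t c v = (\<integral>\<omega>. (c + P t \<omega> \<bullet> v) * (if B (c + P t \<omega> \<bullet> v) then 1 else 0) \<partial>M)"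

definition trunc_second :: "(real \<Rightarrow> bool) \<Rightarrow> nat \<Rightarrow> real \<Rightarrow> real^'n \<Rightarrow> real" where
  "trunc_second B t c v = (\<integral>\<omega>. (c + P t \<omega> \<bullet> v)\<^sup>2 * (if B (c + P t \<omega> \<bullet> v) then 1 else 0) \<partial>M)"

lemma measurable_affine_return_pred:
  assumes "t < T" and "Measurable.pred borel B"
  shows "Measurable.pred M (\<lambda>\<omega>. B (c + P t \<omega> \<bullet> v))"
proof (rule measurable_compose[OF _ \<open>Measurable.pred borel B\<close>])
  show "(\<lambda>\<omega>. c + P t \<omega> \<bullet> v) \<in> borel_measurable M"
    using \<open>t < T\<close> by measurable
qed

lemma integrable_trunc:
  "t < T \<Longrightarrow> Measurable.pred borel B \<Longrightarrow>
    integrable M (\<lambda>\<omega>. (c + P t \<omega> \<bullet> v) * (if B (c + P t \<omega> \<bullet> v) then 1 else 0))"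
  by (intro integrable_mult_if integrable_affine_return measurable_affine_return_pred)

lemma integrable_trunc_square:
  "t < T \<Longrightarrow> Measurable.pred borel B \<Longrightarrow>
    integrable M (\<lambda>\<omega>. (c + P t \<omega> \<bullet> v)\<^sup>2 * (if B (c + P t \<omega> \<bullet> v) then 1 else 0))"
  by (intro integrable_mult_if integrable_affine_return_square measurable_affine_return_pred)

lemma trunc_mean_split:
  "t < T \<Longrightarrow> Measurable.pred borel B \<Longrightarrow>
    trunc_mean B t c v + trunc_mean (\<lambda>z. \<not> B z) t c v = c + mean_vec M (P t) \<bullet> v"
  unfolding trunc_mean_def
  by (simp add: integral_split_if integrable_affine_return integral_affine_return)

lemma trunc_second_split:
  "t < T \<Longrightarrow> Measurable.pred borel B \<Longrightarrow>
    trunc_second B t c v + trunc_second (\<lambda>z. \<not> B z) t c v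
      = c\<^sup>2 + 2 * c * (mean_vec M (P t) \<bullet> v) + v \<bullet> (second_moment M (P t) *v v)"
  unfolding trunc_second_def
  by (simp add: integral_split_if integrable_affine_return_square integral_affine_return_square)

lemma trunc_mean_scaleR:
  assumes "\<And>z. B (y * z) \<longleftrightarrow> B' z"
  shows "trunc_mean B t (y * c) (y *\<^sub>R v) = y * trunc_mean B' t c v"
proof -
  have "y * c + y * (P t \<omega> \<bullet> v) = y * (c + P t \<omega> \<bullet> v)" for \<omega>
    by (simp add: algebra_simps)
  then show ?thesis
    unfolding trunc_mean_def by (simp add: assms mult.assoc)
qed

lemma trunc_second_scaleR:
  assumes "\<And>z. B (y * z) \<longleftrightarrow> B' z"
  shows "trunc_second B t (y * c) (y *\<^sub>R v) = y\<^sup>2 * trunc_second B' t c v"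
proof -
  have "y * c + y * (P t \<omega> \<bullet> v) = y * (c + P t \<omega> \<bullet> v)" for \<omega>
    by (simp add: algebra_simps)
  then show ?thesis
    unfolding trunc_second_def by (simp add: assms mult.assoc power_mult_distrib)
qed

end

section \<open>Wealth under the policy\<close>

locale behavioral_policy = excess_returns M P T
  for M :: "'a measure" and P :: "nat \<Rightarrow> 'a \<Rightarrow> real^'n" and T :: nat +
  fixes s :: "nat \<Rightarrow> real" and W :: real and gp gm :: "nat \<Rightarrow> real"
    and Kp Km :: "nat \<Rightarrow> real^'n" and ap am bp bm :: "nat \<Rightarrow> real"
  assumes riskless_nonzero: "\<And>t. t < T \<Longrightarrow> s t \<noteq> 0"
    and terminal_coefs: "ap T = 0" "am T = 0" "bp T = 0" "bm T = 0"
    and ap_rec: "\<And>t. t < T \<Longrightarrow> ap t =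
        rho s T (Suc t) * (mean_vec M (P t) \<bullet> Kp t)
        + (\<integral>\<omega>. ap (Suc t) * (s t + P t \<omega> \<bullet> Kp t) * (if s t + P t \<omega> \<bullet> Kp t \<ge> 0 then 1 else 0) \<partial>M)
        + (\<integral>\<omega>. am (Suc t) * (s t + P t \<omega> \<bullet> Kp t) * (if s t + P t \<omega> \<bullet> Kp t < 0 then 1 else 0) \<partial>M)"
    and am_rec: "\<And>t. t < T \<Longrightarrow> am t =
        rho s T (Suc t) * (mean_vec M (P t) \<bullet> Km t)
        + (\<integral>\<omega>. ap (Suc t) * (s t + P t \<omega> \<bullet> Km t) * (if s t + P t \<omega> \<bullet> Km t \<le> 0 then 1 else 0) \<partial>M)
        + (\<integral>\<omega>. am (Suc t) * (s t + P t \<omega> \<bullet> Km t) * (if s t + P t \<omega> \<bullet> Km t > 0 then 1 else 0) \<partial>M)"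
    and bp_rec: "\<And>t. t < T \<Longrightarrow> bp t =
        (rho s T (Suc t))\<^sup>2 * (Kp t \<bullet> (second_moment M (P t) *v Kp t))
        + 2 * rho s T (Suc t) * (\<integral>\<omega>. ap (Suc t) * (s t + P t \<omega> \<bullet> Kp t) * (P t \<omega> \<bullet> Kp t)
              * (if s t + P t \<omega> \<bullet> Kp t \<ge> 0 then 1 else 0) \<partial>M)
        + 2 * rho s T (Suc t) * (\<integral>\<omega>. am (Suc t) * (s t + P t \<omega> \<bullet> Kp t) * (P t \<omega> \<bullet> Kp t)
              * (if s t + P t \<omega> \<bullet> Kp t < 0 then 1 else 0) \<partial>M)
        + (\<integral>\<omega>. bp (Suc t) * (s t + P t \<omega> \<bullet> Kp t)\<^sup>2 * (if s t + P t \<omega> \<bullet> Kp t \<ge> 0 then 1 else 0) \<partial>M)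
        + (\<integral>\<omega>. bm (Suc t) * (s t + P t \<omega> \<bullet> Kp t)\<^sup>2 * (if s t + P t \<omega> \<bullet> Kp t < 0 then 1 else 0) \<partial>M)"
    and bm_rec: "\<And>t. t < T \<Longrightarrow> bm t =
        (rho s T (Suc t))\<^sup>2 * (Km t \<bullet> (second_moment M (P t) *v Km t))
        + 2 * rho s T (Suc t) * (\<integral>\<omega>. ap (Suc t) * (s t + P t \<omega> \<bullet> Km t) * (P t \<omega> \<bullet> Km t)
              * (if s t + P t \<omega> \<bullet> Km t \<le> 0 then 1 else 0) \<partial>M)
        + 2 * rho s T (Suc t) * (\<integral>\<omega>. am (Suc t) * (s t + P t \<omega> \<bullet> Km t) * (P t \<omega> \<bullet> Km t)
              * (if s t + P t \<omega> \<bullet> Km t > 0 then 1 else 0) \<partial>M)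
        + (\<integral>\<omega>. bp (Suc t) * (s t + P t \<omega> \<bullet> Km t)\<^sup>2 * (if s t + P t \<omega> \<bullet> Km t \<le> 0 then 1 else 0) \<partial>M)
        + (\<integral>\<omega>. bm (Suc t) * (s t + P t \<omega> \<bullet> Km t)\<^sup>2 * (if s t + P t \<omega> \<bullet> Km t > 0 then 1 else 0) \<partial>M)"
begin

definition target :: "nat \<Rightarrow> real" where
  "target t = W / rho s T t"

definition policy :: "nat \<Rightarrow> real \<Rightarrow> real^'n" where
  "policy t x = (if target t \<le> x then (x - target t) *\<^sub>R Kp t else (x - target t) *\<^sub>R Km t)"

abbreviation objective :: "nat \<Rightarrow> real \<Rightarrow> real^'n \<Rightarrow> real" where
  "objective \<equiv> tc_objective M P s T gp gm W policy"

definition gain :: "bool \<Rightarrow> nat \<Rightarrow> real^'n" where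
  "gain sg t = (if sg then Kp t else Km t)"

definition coef_a :: "bool \<Rightarrow> nat \<Rightarrow> real" where
  "coef_a sg t = (if sg then ap t else am t)"

definition coef_b :: "bool \<Rightarrow> nat \<Rightarrow> real" where
  "coef_b sg t = (if sg then bp t else bm t)"

text \<open>The factor by which a deviation on side sg grows over the periods j, ..., j + k - 1 along the
returns p.\<close>

fun growth :: "bool \<Rightarrow> nat \<Rightarrow> nat \<Rightarrow> (nat \<Rightarrow> real^'n) \<Rightarrow> real" where
  "growth sg 0 j p = 1"
| "growth sg (Suc k) j p =
    (s j + p j \<bullet> gain sg j) * growth (above_after sg (s j + p j \<bullet> gain sg j)) k (Suc j) p"

definition future :: "bool \<Rightarrow> nat \<Rightarrow> 'a \<Rightarrow> real" where
  "future sg t \<omega> = growth sg (T - t) t (\<lambda>i. P i \<omega>)"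

lemma target_Suc: "t < T \<Longrightarrow> s t * target t = target (Suc t)"
  using riskless_nonzero[of t] rho_Suc[of t T s] by (simp add: target_def)

lemma target_horizon [simp]: "target T = W"
  by (simp add: target_def)

lemma wealth_run_policy:
  "j + k = T \<Longrightarrow>
    wealth_run s P policy j k x \<omega> = W + (x - target j) * growth (target j \<le> x) k j (\<lambda>i. P i \<omega>)"
proof (induction k arbitrary: j x)
  case 0
  then show ?case by simp
next
  case (Suc k)
  define z where "z = s j + P j \<omega> \<bullet> gain (target j \<le> x) j"
  define x' where "x' = s j * x + P j \<omega> \<bullet> policy j x"
  have deviation: "x' - target (Suc j) = (x - target j) * z"
    using target_Suc[of j] Suc.prems
    by (simp add: x'_def z_def policy_def gain_def algebra_simps)
  have side: "(x - target j) * z * growth (target (Suc j) \<le> x') k (Suc j) (\<lambda>i. P i \<omega>)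
      = (x - target j) * z * growth (above_after (target j \<le> x) z) k (Suc j) (\<lambda>i. P i \<omega>)"
  proof (cases "x = target j")
    case False
    then have "0 < x - target j \<longleftrightarrow> target j \<le> x"
      by auto
    moreover have "target (Suc j) \<le> x' \<longleftrightarrow> 0 \<le> (x - target j) * z"
      using deviation by linarith
    ultimately have "target (Suc j) \<le> x' \<longleftrightarrow> above_after (target j \<le> x) z"
      using False by (simp add: nonneg_mult_iff_above_after)
    then show ?thesis by simp
  qed simp
  have "wealth_run s P policy j (Suc k) x \<omega> = wealth_run s P policy (Suc j) k x' \<omega>"
    by (simp add: x'_def)
  also have "\<dots> = W + (x - target j) * z * growth (target (Suc j) \<le> x') k (Suc j) (\<lambda>i. P i \<omega>)"
    using Suc by (simp add: deviation)
  finally show ?case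
    using side by (simp add: z_def mult.assoc)
qed

lemma terminal_wealth_policy:
  assumes "t < T"
  shows "terminal_wealth s P policy T t x v \<omega> = W + (s t * (x - target t) + P t \<omega> \<bullet> v)
      * future (0 \<le> s t * (x - target t) + P t \<omega> \<bullet> v) (Suc t) \<omega>"
proof -
  define x' where "x' = s t * x + P t \<omega> \<bullet> v"
  have deviation: "x' - target (Suc t) = s t * (x - target t) + P t \<omega> \<bullet> v"
    using target_Suc[OF assms] by (simp add: x'_def algebra_simps)
  have "terminal_wealth s P policy T t x v \<omega>
      = W + (x' - target (Suc t)) * future (target (Suc t) \<le> x') (Suc t) \<omega>"
    using wealth_run_policy[of "Suc t" "T - Suc t"] assms
    by (simp add: terminal_wealth_def future_def x'_def)
  also have "target (Suc t) \<le> x' \<longleftrightarrow> 0 \<le> s t * (x - target t) + P t \<omega> \<bullet> v"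
    using deviation by linarith
  finally show ?thesis
    unfolding deviation .
qed

lemma future_horizon [simp]: "future sg T \<omega> = 1"
  by (simp add: future_def)

lemma future_Suc:
  "t < T \<Longrightarrow> future sg t \<omega>
    = (s t + P t \<omega> \<bullet> gain sg t) * future (above_after sg (s t + P t \<omega> \<bullet> gain sg t)) (Suc t) \<omega>"
proof -
  assume "t < T"
  then have "T - t = Suc (T - Suc t)"
    by simp
  then show ?thesis
    by (simp add: future_def)
qed

lemma growth_cong:
  "(\<And>i. j \<le> i \<Longrightarrow> i < j + k \<Longrightarrow> p i = q i) \<Longrightarrow> growth sg k j p = growth sg k j q"
proof (induction k arbitrary: j sg)
  case (Suc k)
  have "growth b k (Suc j) p = growth b k (Suc j) q" for b
    using Suc.prems by (intro Suc.IH) auto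
  moreover have "p j = q j"
    using Suc.prems by auto
  ultimately show ?case by simp
qed simp

lemma measurable_growth:
  "{j..<j + k} \<subseteq> I \<Longrightarrow> (\<lambda>p. growth sg k j p) \<in> borel_measurable (PiM I (\<lambda>_. borel))"
proof (induction k arbitrary: j sg)
  case (Suc k)
  then have [measurable]: "(\<lambda>p. p j) \<in> borel_measurable (PiM I (\<lambda>_. borel))"
    by (intro measurable_component_singleton) auto
  have [measurable]: "(\<lambda>p. growth b k (Suc j) p) \<in> borel_measurable (PiM I (\<lambda>_. borel))" for b
    using Suc by (intro Suc.IH) auto
  have "(\<lambda>p. growth sg (Suc k) j p) = (\<lambda>p. if above_after sg (s j + p j \<bullet> gain sg j)
      then (s j + p j \<bullet> gain sg j) * growth True k (Suc j) p
      else (s j + p j \<bullet> gain sg j) * growth False k (Suc j) p)"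
    by auto
  also have "\<dots> \<in> borel_measurable (PiM I (\<lambda>_. borel))"
    by measurable
  finally show ?case .
next
  case 0
  have "growth sg 0 j = (\<lambda>p. 1)"
    by auto
  then show ?case
    by simp
qed

lemma integral_mult_future:
  fixes f :: "real^'n \<Rightarrow> real" and G :: "real \<Rightarrow> real"
  assumes t: "t < T" and f: "f \<in> borel_measurable borel" and G: "G \<in> borel_measurable borel"
    and int_f: "integrable M (\<lambda>\<omega>. f (P t \<omega>))"
    and int_G: "integrable M (\<lambda>\<omega>. G (future b (Suc t) \<omega>))"
  shows "integrable M (\<lambda>\<omega>. f (P t \<omega>) * G (future b (Suc t) \<omega>))"
    and "(\<integral>\<omega>. f (P t \<omega>) * G (future b (Suc t) \<omega>) \<partial>M)
      = (\<integral>\<omega>. f (P t \<omega>) \<partial>M) * (\<integral>\<omega>. G (future b (Suc t) \<omega>) \<partial>M)"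
proof -
  define g where "g p = G (growth b (T - Suc t) (Suc t) p)" for p
  have g: "g \<in> borel_measurable (PiM {Suc t..<T} (\<lambda>_. borel))"
    unfolding g_def using t by (intro measurable_compose[OF measurable_growth G]) auto
  have future_eq: "g (restrict (\<lambda>i. P i \<omega>) {Suc t..<T}) = G (future b (Suc t) \<omega>)" for \<omega>
    unfolding g_def future_def using t by (subst growth_cong[where q = "\<lambda>i. P i \<omega>"]) auto
  note product = integral_mult_independent_future[OF t f g int_f, unfolded future_eq]
  show "integrable M (\<lambda>\<omega>. f (P t \<omega>) * G (future b (Suc t) \<omega>))"
    using product(1) int_G by simp
  show "(\<integral>\<omega>. f (P t \<omega>) * G (future b (Suc t) \<omega>) \<partial>M)
      = (\<integral>\<omega>. f (P t \<omega>) \<partial>M) * (\<integral>\<omega>. G (future b (Suc t) \<omega>) \<partial>M)"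
    using product(2) int_G by simp
qed

text \<open>Mean and second moment of the terminal deviation when the deviation after period t is
c + P_t'v and B decides its side (see deviation_moments).\<close>

definition deviation_mean :: "(real \<Rightarrow> bool) \<Rightarrow> nat \<Rightarrow> real \<Rightarrow> real^'n \<Rightarrow> real" where
  "deviation_mean B t c v =
    trunc_mean B t c v * (rho s T (Suc t) + ap (Suc t))
    + trunc_mean (\<lambda>z. \<not> B z) t c v * (rho s T (Suc t) + am (Suc t))"

definition deviation_moment2 :: "(real \<Rightarrow> bool) \<Rightarrow> nat \<Rightarrow> real \<Rightarrow> real^'n \<Rightarrow> real" where
  "deviation_moment2 B t c v =
    trunc_second B t c v * ((rho s T (Suc t))\<^sup>2 + 2 * rho s T (Suc t) * ap (Suc t) + bp (Suc t))
    + trunc_second (\<lambda>z. \<not> B z) t c v * ((rho s T (Suc t))\<^sup>2 + 2 * rho s T (Suc t) * am (Suc t) + bm (Suc t))"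

definition future_moments :: "nat \<Rightarrow> bool" where
  "future_moments t \<longleftrightarrow> (\<forall>sg.
     integrable M (future sg t) \<and> integrable M (\<lambda>\<omega>. (future sg t \<omega>)\<^sup>2)
     \<and> (\<integral>\<omega>. future sg t \<omega> \<partial>M) = rho s T t + coef_a sg t
     \<and> (\<integral>\<omega>. (future sg t \<omega>)\<^sup>2 \<partial>M) = (rho s T t)\<^sup>2 + 2 * rho s T t * coef_a sg t + coef_b sg t)"

lemma deviation_moments:
  fixes B :: "real \<Rightarrow> bool" and c :: real and v :: "real^'n"
  assumes t: "t < T" and B [measurable]: "Measurable.pred borel B" and moments: "future_moments (Suc t)"
  defines "D \<equiv> \<lambda>\<omega>. (c + P t \<omega> \<bullet> v) * future (B (c + P t \<omega> \<bullet> v)) (Suc t) \<omega>"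
  shows "integrable M D" and "integrable M (\<lambda>\<omega>. (D \<omega>)\<^sup>2)"
    and "(\<integral>\<omega>. D \<omega> \<partial>M) = deviation_mean B t c v"
    and "(\<integral>\<omega>. (D \<omega>)\<^sup>2 \<partial>M) = deviation_moment2 B t c v"
proof -
  define f where "f b x = (c + x \<bullet> v) * (if B (c + x \<bullet> v) = b then 1 else 0)" for b x
  define g where "g b x = (c + x \<bullet> v)\<^sup>2 * (if B (c + x \<bullet> v) = b then 1 else 0)" for b x
  have D_eq: "D = (\<lambda>\<omega>. f True (P t \<omega>) * future True (Suc t) \<omega> + f False (P t \<omega>) * future False (Suc t) \<omega>)"
    by (rule ext) (simp add: D_def f_def)
  have D2_eq: "(\<lambda>\<omega>. (D \<omega>)\<^sup>2) = (\<lambda>\<omega>. g True (P t \<omega>) * (future True (Suc t) \<omega>)\<^sup>2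
      + g False (P t \<omega>) * (future False (Suc t) \<omega>)\<^sup>2)"
    by (rule ext) (simp add: D_def g_def power_mult_distrib)
  have "f b \<in> borel_measurable borel" "g b \<in> borel_measurable borel" for b
    unfolding f_def g_def by measurable
  moreover have "integrable M (\<lambda>\<omega>. f b (P t \<omega>))" "integrable M (\<lambda>\<omega>. g b (P t \<omega>))" for b
    unfolding f_def g_def using B
    by (simp_all add: integrable_trunc[OF t, of "\<lambda>z. B z = b"] integrable_trunc_square[OF t, of "\<lambda>z. B z = b"])
  moreover have "integrable M (future b (Suc t))" "integrable M (\<lambda>\<omega>. (future b (Suc t) \<omega>)\<^sup>2)" for b
    using moments unfolding future_moments_def by blast+
  ultimately have first: "integrable M (\<lambda>\<omega>. f b (P t \<omega>) * future b (Suc t) \<omega>)"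
      "(\<integral>\<omega>. f b (P t \<omega>) * future b (Suc t) \<omega> \<partial>M)
        = (\<integral>\<omega>. f b (P t \<omega>) \<partial>M) * (\<integral>\<omega>. future b (Suc t) \<omega> \<partial>M)"
    and second: "integrable M (\<lambda>\<omega>. g b (P t \<omega>) * (future b (Suc t) \<omega>)\<^sup>2)"
      "(\<integral>\<omega>. g b (P t \<omega>) * (future b (Suc t) \<omega>)\<^sup>2 \<partial>M)
        = (\<integral>\<omega>. g b (P t \<omega>) \<partial>M) * (\<integral>\<omega>. (future b (Suc t) \<omega>)\<^sup>2 \<partial>M)" for b
    using integral_mult_future[OF t, of "f b" "\<lambda>x. x"] integral_mult_future[OF t, of "g b" "\<lambda>x. x\<^sup>2"]
    by auto
  have "(\<integral>\<omega>. f b (P t \<omega>) \<partial>M) = trunc_mean (\<lambda>z. B z = b) t c v"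
    "(\<integral>\<omega>. g b (P t \<omega>) \<partial>M) = trunc_second (\<lambda>z. B z = b) t c v" for b
    by (simp_all add: f_def g_def trunc_mean_def trunc_second_def)
  moreover have "(\<integral>\<omega>. future b (Suc t) \<omega> \<partial>M) = rho s T (Suc t) + coef_a b (Suc t)"
    "(\<integral>\<omega>. (future b (Suc t) \<omega>)\<^sup>2 \<partial>M)
      = (rho s T (Suc t))\<^sup>2 + 2 * rho s T (Suc t) * coef_a b (Suc t) + coef_b b (Suc t)" for b
    using moments unfolding future_moments_def by blast+
  ultimately show "integrable M D" "integrable M (\<lambda>\<omega>. (D \<omega>)\<^sup>2)"
    "(\<integral>\<omega>. D \<omega> \<partial>M) = deviation_mean B t c v"
    "(\<integral>\<omega>. (D \<omega>)\<^sup>2 \<partial>M) = deviation_moment2 B t c v"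
    unfolding D2_eq unfolding D_eq using first second
    by (simp_all add: deviation_mean_def deviation_moment2_def coef_a_def coef_b_def)
qed

lemma coef_a_rec:
  assumes t: "t < T"
  shows "coef_a sg t = rho s T (Suc t) * (mean_vec M (P t) \<bullet> gain sg t)
    + ap (Suc t) * trunc_mean (above_after sg) t (s t) (gain sg t)
    + am (Suc t) * trunc_mean (\<lambda>z. \<not> above_after sg z) t (s t) (gain sg t)"
  using ap_rec[OF t] am_rec[OF t]
  by (cases sg) (simp_all add: coef_a_def gain_def above_after_def trunc_mean_def mult.assoc not_le)

lemma integral_trunc_cross:
  assumes t: "t < T" and B: "Measurable.pred borel B"
  shows "(\<integral>\<omega>. (c + P t \<omega> \<bullet> v) * (P t \<omega> \<bullet> v) * (if B (c + P t \<omega> \<bullet> v) then 1 else 0) \<partial>M)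
    = trunc_second B t c v - c * trunc_mean B t c v"
proof -
  have "(\<integral>\<omega>. (c + P t \<omega> \<bullet> v) * (P t \<omega> \<bullet> v) * (if B (c + P t \<omega> \<bullet> v) then 1 else 0) \<partial>M)
      = (\<integral>\<omega>. (c + P t \<omega> \<bullet> v)\<^sup>2 * (if B (c + P t \<omega> \<bullet> v) then 1 else 0)
          - c * ((c + P t \<omega> \<bullet> v) * (if B (c + P t \<omega> \<bullet> v) then 1 else 0)) \<partial>M)"
    by (rule Bochner_Integration.integral_cong) (auto simp: power2_eq_square algebra_simps)
  also have "\<dots> = trunc_second B t c v - c * trunc_mean B t c v"
    using integrable_trunc[OF t B] integrable_trunc_square[OF t B]
    by (simp add: trunc_mean_def trunc_second_def)
  finally show ?thesis .
qed

lemma coef_b_rec: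
  assumes t: "t < T"
  shows "coef_b sg t = (rho s T (Suc t))\<^sup>2 * (gain sg t \<bullet> (second_moment M (P t) *v gain sg t))
    + 2 * rho s T (Suc t) * ap (Suc t) * (trunc_second (above_after sg) t (s t) (gain sg t)
        - s t * trunc_mean (above_after sg) t (s t) (gain sg t))
    + 2 * rho s T (Suc t) * am (Suc t) * (trunc_second (\<lambda>z. \<not> above_after sg z) t (s t) (gain sg t)
        - s t * trunc_mean (\<lambda>z. \<not> above_after sg z) t (s t) (gain sg t))
    + bp (Suc t) * trunc_second (above_after sg) t (s t) (gain sg t)
    + bm (Suc t) * trunc_second (\<lambda>z. \<not> above_after sg z) t (s t) (gain sg t)"
  using bp_rec[OF t] bm_rec[OF t]
    integral_trunc_cross[OF t measurable_above_after, of "s t" "gain sg t" sg]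
    integral_trunc_cross[OF t, of "\<lambda>z. \<not> above_after sg z" "s t" "gain sg t"]
  by (cases sg)
    (simp_all add: coef_b_def gain_def above_after_def trunc_mean_def trunc_second_def mult.assoc not_le)

lemma future_moments_horizon: "future_moments T"
proof -
  have "future sg T = (\<lambda>\<omega>. 1)" for sg
    by auto
  then show ?thesis
    by (simp add: future_moments_def coef_a_def coef_b_def terminal_coefs prob_space)
qed

lemma future_moments_step:
  assumes t: "t < T" and moments: "future_moments (Suc t)"
  shows "future_moments t"
  unfolding future_moments_def
proof
  fix sg
  define r where "r = rho s T (Suc t)"
  define mK where "mK = mean_vec M (P t) \<bullet> gain sg t"
  define Q where "Q = gain sg t \<bullet> (second_moment M (P t) *v gain sg t)"
  define I where "I b = trunc_mean (\<lambda>z. above_after sg z = b) t (s t) (gain sg t)" for b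
  define J where "J b = trunc_second (\<lambda>z. above_after sg z = b) t (s t) (gain sg t)" for b
  have rho_t: "rho s T t = s t * r"
    unfolding r_def by (rule rho_Suc[OF t])
  have "I True + I False = s t + mK" "J True + J False = (s t)\<^sup>2 + 2 * s t * mK + Q"
    using trunc_mean_split[OF t measurable_above_after] trunc_second_split[OF t measurable_above_after]
    by (simp_all add: I_def J_def mK_def Q_def)
  moreover have "coef_a sg t = r * mK + ap (Suc t) * I True + am (Suc t) * I False"
    "coef_b sg t = r\<^sup>2 * Q + 2 * r * ap (Suc t) * (J True - s t * I True)
      + 2 * r * am (Suc t) * (J False - s t * I False) + bp (Suc t) * J True + bm (Suc t) * J False"
    using coef_a_rec[OF t, of sg] coef_b_rec[OF t, of sg]
    by (simp_all add: r_def mK_def Q_def I_def J_def)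
  ultimately have "deviation_mean (above_after sg) t (s t) (gain sg t) = rho s T t + coef_a sg t"
    "deviation_moment2 (above_after sg) t (s t) (gain sg t)
      = (rho s T t)\<^sup>2 + 2 * rho s T t * coef_a sg t + coef_b sg t"
    unfolding deviation_mean_def deviation_moment2_def rho_t
    by (simp_all add: I_def J_def r_def[symmetric]) algebra+
  moreover have "future sg t = (\<lambda>\<omega>. (s t + P t \<omega> \<bullet> gain sg t)
      * future (above_after sg (s t + P t \<omega> \<bullet> gain sg t)) (Suc t) \<omega>)"
    using future_Suc[OF t] by auto
  ultimately show "integrable M (future sg t) \<and> integrable M (\<lambda>\<omega>. (future sg t \<omega>)\<^sup>2)
     \<and> (\<integral>\<omega>. future sg t \<omega> \<partial>M) = rho s T t + coef_a sg t
     \<and> (\<integral>\<omega>. (future sg t \<omega>)\<^sup>2 \<partial>M) = (rho s T t)\<^sup>2 + 2 * rho s T t * coef_a sg t + coef_b sg t"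
    using deviation_moments[OF t measurable_above_after[of sg] moments, of "s t" "gain sg t"] by simp
qed

lemma future_moments_le_horizon: "t \<le> T \<Longrightarrow> future_moments t"
  by (induction t rule: inc_induct) (simp_all add: future_moments_horizon future_moments_step)

section \<open>The objective along scaled controls\<close>

lemma objective_eq:
  assumes t: "t < T"
  shows "objective t x v = deviation_moment2 (\<lambda>z. 0 \<le> z) t (s t * (x - target t)) v
    - (deviation_mean (\<lambda>z. 0 \<le> z) t (s t * (x - target t)) v)\<^sup>2
    - gamma_fun s T gp gm W t x * (W + deviation_mean (\<lambda>z. 0 \<le> z) t (s t * (x - target t)) v)"
proof -
  define c where "c = s t * (x - target t)"
  define D where "D \<omega> = (c + P t \<omega> \<bullet> v) * future (0 \<le> c + P t \<omega> \<bullet> v) (Suc t) \<omega>" for \<omega>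
  have "Measurable.pred borel (\<lambda>z::real. 0 \<le> z)"
    by measurable
  note moments =
    deviation_moments[OF t this future_moments_le_horizon[OF Suc_leI[OF t]], of c v, folded D_def]
  have "terminal_wealth s P policy T t x v = (\<lambda>\<omega>. W + D \<omega>)"
    by (rule ext) (simp add: terminal_wealth_policy[OF t] D_def c_def)
  moreover have "(\<integral>\<omega>. W + D \<omega> \<partial>M) = W + expectation D"
    using moments(1) by (simp add: prob_space)
  moreover have "(\<integral>\<omega>. (W + D \<omega> - (W + expectation D))\<^sup>2 \<partial>M)
      = expectation (\<lambda>\<omega>. (D \<omega>)\<^sup>2) - (expectation D)\<^sup>2"
    using variance_eq[OF moments(1,2)] by simp
  ultimately show ?thesis
    using t by (simp add: tc_objective_def moments(3,4) c_def)
qed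

lemma deviation_mean_scaleR:
  assumes "y \<noteq> 0"
  shows "deviation_mean (\<lambda>z. 0 \<le> z) t (y * c) (y *\<^sub>R v)
    = y * deviation_mean (above_after (0 < y)) t c v"
proof -
  have "trunc_mean (\<lambda>z. 0 \<le> z) t (y * c) (y *\<^sub>R v) = y * trunc_mean (above_after (0 < y)) t c v"
    "trunc_mean (\<lambda>z. \<not> 0 \<le> z) t (y * c) (y *\<^sub>R v)
      = y * trunc_mean (\<lambda>z. \<not> above_after (0 < y) z) t c v"
    using assms by (simp_all add: trunc_mean_scaleR nonneg_mult_iff_above_after)
  then show ?thesis
    by (simp add: deviation_mean_def algebra_simps)
qed

lemma deviation_moment2_scaleR:
  assumes "y \<noteq> 0"
  shows "deviation_moment2 (\<lambda>z. 0 \<le> z) t (y * c) (y *\<^sub>R v)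
    = y\<^sup>2 * deviation_moment2 (above_after (0 < y)) t c v"
proof -
  have "trunc_second (\<lambda>z. 0 \<le> z) t (y * c) (y *\<^sub>R v) = y\<^sup>2 * trunc_second (above_after (0 < y)) t c v"
    "trunc_second (\<lambda>z. \<not> 0 \<le> z) t (y * c) (y *\<^sub>R v)
      = y\<^sup>2 * trunc_second (\<lambda>z. \<not> above_after (0 < y) z) t c v"
    using assms by (simp_all add: trunc_second_scaleR nonneg_mult_iff_above_after)
  then show ?thesis
    by (simp add: deviation_moment2_def algebra_simps)
qed

lemma objective_scaleR:
  assumes t: "t < T" and x: "x \<noteq> target t"
  shows "objective t x ((x - target t) *\<^sub>R K)
    = (x - target t)\<^sup>2 * (deviation_moment2 (above_after (target t < x)) t (s t) K
        - (deviation_mean (above_after (target t < x)) t (s t) K)\<^sup>2)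
      - gamma_fun s T gp gm W t x * (W + (x - target t) * deviation_mean (above_after (target t < x)) t (s t) K)"
proof -
  have y: "x - target t \<noteq> 0"
    using x by simp
  have "s t * (x - target t) = (x - target t) * s t"
    by simp
  then show ?thesis
    unfolding objective_eq[OF t] using deviation_mean_scaleR[OF y] deviation_moment2_scaleR[OF y]
    by (simp add: power_mult_distrib right_diff_distrib)
qed

lemma deviation_mean_eq:
  "t < T \<Longrightarrow> Measurable.pred borel B \<Longrightarrow> deviation_mean B t c v
    = rho s T (Suc t) * (c + mean_vec M (P t) \<bullet> v)
      + (ap (Suc t) * trunc_mean B t c v + am (Suc t) * trunc_mean (\<lambda>z. \<not> B z) t c v)"
  using trunc_mean_split[of t B c v] unfolding deviation_mean_def by algebra

lemma deviation_variance_eq: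
  assumes "t < T" and "Measurable.pred borel B"
  shows "deviation_moment2 B t c v - (deviation_mean B t c v)\<^sup>2
    = (rho s T (Suc t))\<^sup>2 * (v \<bullet> (cov_mat M (P t) *v v))
      + (2 * rho s T (Suc t) * ap (Suc t) + bp (Suc t)) * trunc_second B t c v
      + (2 * rho s T (Suc t) * am (Suc t) + bm (Suc t)) * trunc_second (\<lambda>z. \<not> B z) t c v
      - (ap (Suc t) * trunc_mean B t c v + am (Suc t) * trunc_mean (\<lambda>z. \<not> B z) t c v)\<^sup>2
      - 2 * rho s T (Suc t) * (ap (Suc t) * trunc_mean B t c v + am (Suc t) * trunc_mean (\<lambda>z. \<not> B z) t c v)
          * (c + mean_vec M (P t) \<bullet> v)"
  using trunc_mean_split[OF assms, of c v] trunc_second_split[OF assms, of c v]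
  unfolding deviation_moment2_def deviation_mean_eq[OF assms] cov_mat_quadratic_form
  by algebra

lemma F_plus_eq:
  assumes t: "t < T"
  shows "F_plus M P s T ap am bp bm gp t K = deviation_moment2 (above_after True) t (s t) K
    - (deviation_mean (above_after True) t (s t) K)\<^sup>2 - gp t * deviation_mean (above_after True) t (s t) K"
proof -
  define r where "r = rho s T (Suc t)"
  define I where "I b = trunc_mean (\<lambda>z. above_after True z = b) t (s t) K" for b
  define J where "J b = trunc_second (\<lambda>z. above_after True z = b) t (s t) K" for b
  define Mp where "Mp = ap (Suc t) * I True + am (Suc t) * I False"
  have "F_plus M P s T ap am bp bm gp t K = r\<^sup>2 * (K \<bullet> (cov_mat M (P t) *v K))
      + (2 * r * ap (Suc t) + bp (Suc t)) * J True + (2 * r * am (Suc t) + bm (Suc t)) * J False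
      - Mp\<^sup>2 - 2 * r * Mp * (s t + mean_vec M (P t) \<bullet> K)
      - gp t * Mp - r * gp t * (s t + mean_vec M (P t) \<bullet> K)"
    unfolding F_plus_def Let_def r_def Mp_def I_def J_def
    by (simp add: trunc_mean_def trunc_second_def above_after_def not_le mult.assoc)
  then show ?thesis
    unfolding deviation_variance_eq[OF t measurable_above_after]
    unfolding deviation_mean_eq[OF t measurable_above_after]
    by (simp add: r_def Mp_def I_def J_def algebra_simps)
qed

lemma F_minus_eq:
  assumes t: "t < T"
  shows "F_minus M P s T ap am bp bm gm t K = deviation_moment2 (above_after False) t (s t) K
    - (deviation_mean (above_after False) t (s t) K)\<^sup>2 + gm t * deviation_mean (above_after False) t (s t) K"
proof -
  define r where "r = rho s T (Suc t)"
  define I where "I b = trunc_mean (\<lambda>z. above_after False z = b) t (s t) K" for b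
  define J where "J b = trunc_second (\<lambda>z. above_after False z = b) t (s t) K" for b
  define Mm where "Mm = ap (Suc t) * I True + am (Suc t) * I False"
  have "F_minus M P s T ap am bp bm gm t K = r\<^sup>2 * (K \<bullet> (cov_mat M (P t) *v K))
      + (2 * r * ap (Suc t) + bp (Suc t)) * J True + (2 * r * am (Suc t) + bm (Suc t)) * J False
      - Mm\<^sup>2 - 2 * r * Mm * (s t + mean_vec M (P t) \<bullet> K)
      + gm t * Mm + r * gm t * (s t + mean_vec M (P t) \<bullet> K)"
    unfolding F_minus_def Let_def r_def Mm_def I_def J_def
    by (simp add: trunc_mean_def trunc_second_def above_after_def not_le mult.assoc)
  then show ?thesis
    unfolding deviation_variance_eq[OF t measurable_above_after]
    unfolding deviation_mean_eq[OF t measurable_above_after]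
    by (simp add: r_def Mm_def I_def J_def algebra_simps)
qed

lemma objective_above_target:
  assumes t: "t < T" and x: "target t < x"
  shows "objective t x ((x - target t) *\<^sub>R K)
    = (x - target t)\<^sup>2 * F_plus M P s T ap am bp bm gp t K - gp t * (x - target t) * W"
proof -
  have "gamma_fun s T gp gm W t x = gp t * (x - target t)"
    using x by (simp add: gamma_fun_def target_def)
  then have "objective t x ((x - target t) *\<^sub>R K)
      = (x - target t)\<^sup>2 * (deviation_moment2 (above_after True) t (s t) K
          - (deviation_mean (above_after True) t (s t) K)\<^sup>2)
        - gp t * (x - target t) * (W + (x - target t) * deviation_mean (above_after True) t (s t) K)"
    using x by (simp add: objective_scaleR[OF t])
  also have "\<dots> = (x - target t)\<^sup>2 * F_plus M P s T ap am bp bm gp t K - gp t * (x - target t) * W"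
    unfolding F_plus_eq[OF t] by (simp add: algebra_simps power2_eq_square)
  finally show ?thesis .
qed

lemma objective_below_target:
  assumes t: "t < T" and x: "x < target t"
  shows "objective t x ((x - target t) *\<^sub>R K)
    = (x - target t)\<^sup>2 * F_minus M P s T ap am bp bm gm t K + gm t * (x - target t) * W"
proof -
  have "gamma_fun s T gp gm W t x = - gm t * (x - target t)"
    using x by (simp add: gamma_fun_def target_def)
  then have "objective t x ((x - target t) *\<^sub>R K)
      = (x - target t)\<^sup>2 * (deviation_moment2 (above_after False) t (s t) K
          - (deviation_mean (above_after False) t (s t) K)\<^sup>2)
        + gm t * (x - target t) * (W + (x - target t) * deviation_mean (above_after False) t (s t) K)"
    using x by (simp add: objective_scaleR[OF t])
  also have "\<dots> = (x - target t)\<^sup>2 * F_minus M P s T ap am bp bm gm t K + gm t * (x - target t) * W"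
    unfolding F_minus_eq[OF t] by (simp add: algebra_simps power2_eq_square)
  finally show ?thesis .
qed

lemma objective_at_target:
  assumes t: "t < T"
  shows "objective t (target t) 0 = 0" and "0 \<le> objective t (target t) v"
proof -
  have gamma: "gamma_fun s T gp gm W t (target t) = 0"
    by (simp add: gamma_fun_def target_def)
  then show "objective t (target t) 0 = 0"
    by (simp add: objective_eq[OF t] deviation_mean_def deviation_moment2_def trunc_mean_def
        trunc_second_def)
  show "0 \<le> objective t (target t) v"
    unfolding tc_objective_def Let_def gamma by (simp add: integral_nonneg_AE)
qed

lemma policy_optimal:
  assumes t: "t < T"
    and Kp: "Kp t \<in> cone A \<and>
      (\<forall>K\<in>cone A. F_plus M P s T ap am bp bm gp t (Kp t) \<le> F_plus M P s T ap am bp bm gp t K)"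
    and Km: "Km t \<in> uminus ` cone A \<and>
      (\<forall>K\<in>uminus ` cone A. F_minus M P s T ap am bp bm gm t (Km t) \<le> F_minus M P s T ap am bp bm gm t K)"
  shows "policy t x \<in> cone A \<and> (\<forall>v\<in>cone A. objective t x (policy t x) \<le> objective t x v)"
proof (cases x "target t" rule: linorder_cases)
  case less
  then have "policy t x = (x - target t) *\<^sub>R Km t"
    by (simp add: policy_def)
  moreover have "objective t x ((x - target t) *\<^sub>R Km t) \<le> objective t x v" if "v \<in> cone A" for v
    using less Km \<open>v \<in> cone A\<close>
    by (intro scaled_minimizer[where D = "uminus ` cone A" and F = "F_minus M P s T ap am bp bm gm t"
          and d = "gm t * (x - target t) * W"])
      (auto simp: objective_below_target[OF t] intro: scaleR_mem_neg_cone)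
  ultimately show ?thesis
    using less Km by (simp add: scaleR_neg_cone_mem)
next
  case equal
  then show ?thesis
    using objective_at_target[OF t] by (simp add: policy_def cone_def)
next
  case greater
  then have "policy t x = (x - target t) *\<^sub>R Kp t"
    by (simp add: policy_def)
  moreover have "objective t x ((x - target t) *\<^sub>R Kp t) \<le> objective t x v" if "v \<in> cone A" for v
    using greater Kp \<open>v \<in> cone A\<close>
    by (intro scaled_minimizer[where D = "cone A" and F = "F_plus M P s T ap am bp bm gp t"
          and d = "- gp t * (x - target t) * W"])
      (auto simp: objective_above_target[OF t] intro: scaleR_mem_cone)
  ultimately show ?thesis
    using greater Kp by (simp add: scaleR_mem_cone)
qed

end

theorem theorem2:
  fixes M :: "'a measure"
    and P :: "nat \<Rightarrow> 'a \<Rightarrow> real^'n"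
    and s :: "nat \<Rightarrow> real"
    and T :: nat
    and A :: "real^'n^'m"
    and gp gm :: "nat \<Rightarrow> real"
    and W :: real
    and ap am bp bm :: "nat \<Rightarrow> real"
    and Kp Km :: "nat \<Rightarrow> real^'n"
  assumes prob: "prob_space M"
    and s_gt1: "\<And>t. t < T \<Longrightarrow> s t > 1"
    and meas: "\<And>t. t < T \<Longrightarrow> P t \<in> borel_measurable M"
    and indep: "prob_space.indep_vars M (\<lambda>_. borel) P {..<T}"
    and abs_cont: "\<And>t. t < T \<Longrightarrow> absolutely_continuous lborel (distr M borel (P t))"
    and first_mom: "\<And>t i. t < T \<Longrightarrow> integrable M (\<lambda>\<omega>. P t \<omega> $ i)"
    and second_mom: "\<And>t i. t < T \<Longrightarrow> integrable M (\<lambda>\<omega>. (P t \<omega> $ i)\<^sup>2)"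
    and cov_pd: "\<And>t K. t < T \<Longrightarrow> K \<noteq> 0 \<Longrightarrow> K \<bullet> (cov_mat M (P t) *v K) > 0"
    and no_arb: "\<And>t L. t < T \<Longrightarrow> L \<noteq> 0 \<Longrightarrow>
        \<not> (AE \<omega> in M. P t \<omega> \<bullet> L \<le> 0) \<and> \<not> (AE \<omega> in M. P t \<omega> \<bullet> L \<ge> 0)"
    and gp_nn: "\<And>t. gp t \<ge> 0"
    and gm_nn: "\<And>t. gm t \<ge> 0"
    and term_a: "ap T = 0" "am T = 0"
    and term_b: "bp T = 0" "bm T = 0"
    and Kp_min: "\<And>t. t < T \<Longrightarrow> Kp t \<in> cone A \<and>
        (\<forall>K\<in>cone A. F_plus M P s T ap am bp bm gp t (Kp t) \<le> F_plus M P s T ap am bp bm gp t K)"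
    and Km_min: "\<And>t. t < T \<Longrightarrow> Km t \<in> uminus ` cone A \<and>
        (\<forall>K\<in>uminus ` cone A. F_minus M P s T ap am bp bm gm t (Km t) \<le> F_minus M P s T ap am bp bm gm t K)"
    and ap_rec: "\<And>t. t < T \<Longrightarrow> ap t =
        rho s T (Suc t) * (mean_vec M (P t) \<bullet> Kp t)
        + (\<integral>\<omega>. ap (Suc t) * (s t + P t \<omega> \<bullet> Kp t) * (if s t + P t \<omega> \<bullet> Kp t \<ge> 0 then 1 else 0) \<partial>M)
        + (\<integral>\<omega>. am (Suc t) * (s t + P t \<omega> \<bullet> Kp t) * (if s t + P t \<omega> \<bullet> Kp t < 0 then 1 else 0) \<partial>M)"
    and am_rec: "\<And>t. t < T \<Longrightarrow> am t =
        rho s T (Suc t) * (mean_vec M (P t) \<bullet> Km t)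
        + (\<integral>\<omega>. ap (Suc t) * (s t + P t \<omega> \<bullet> Km t) * (if s t + P t \<omega> \<bullet> Km t \<le> 0 then 1 else 0) \<partial>M)
        + (\<integral>\<omega>. am (Suc t) * (s t + P t \<omega> \<bullet> Km t) * (if s t + P t \<omega> \<bullet> Km t > 0 then 1 else 0) \<partial>M)"
    and bp_rec: "\<And>t. t < T \<Longrightarrow> bp t =
        (rho s T (Suc t))\<^sup>2 * (Kp t \<bullet> (second_moment M (P t) *v Kp t))
        + 2 * rho s T (Suc t) * (\<integral>\<omega>. ap (Suc t) * (s t + P t \<omega> \<bullet> Kp t) * (P t \<omega> \<bullet> Kp t)
              * (if s t + P t \<omega> \<bullet> Kp t \<ge> 0 then 1 else 0) \<partial>M)
        + 2 * rho s T (Suc t) * (\<integral>\<omega>. am (Suc t) * (s t + P t \<omega> \<bullet> Kp t) * (P t \<omega> \<bullet> Kp t)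
              * (if s t + P t \<omega> \<bullet> Kp t < 0 then 1 else 0) \<partial>M)
        + (\<integral>\<omega>. bp (Suc t) * (s t + P t \<omega> \<bullet> Kp t)\<^sup>2 * (if s t + P t \<omega> \<bullet> Kp t \<ge> 0 then 1 else 0) \<partial>M)
        + (\<integral>\<omega>. bm (Suc t) * (s t + P t \<omega> \<bullet> Kp t)\<^sup>2 * (if s t + P t \<omega> \<bullet> Kp t < 0 then 1 else 0) \<partial>M)"
    and bm_rec: "\<And>t. t < T \<Longrightarrow> bm t =
        (rho s T (Suc t))\<^sup>2 * (Km t \<bullet> (second_moment M (P t) *v Km t))
        + 2 * rho s T (Suc t) * (\<integral>\<omega>. ap (Suc t) * (s t + P t \<omega> \<bullet> Km t) * (P t \<omega> \<bullet> Km t)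
              * (if s t + P t \<omega> \<bullet> Km t \<le> 0 then 1 else 0) \<partial>M)
        + 2 * rho s T (Suc t) * (\<integral>\<omega>. am (Suc t) * (s t + P t \<omega> \<bullet> Km t) * (P t \<omega> \<bullet> Km t)
              * (if s t + P t \<omega> \<bullet> Km t > 0 then 1 else 0) \<partial>M)
        + (\<integral>\<omega>. bp (Suc t) * (s t + P t \<omega> \<bullet> Km t)\<^sup>2 * (if s t + P t \<omega> \<bullet> Km t \<le> 0 then 1 else 0) \<partial>M)
        + (\<integral>\<omega>. bm (Suc t) * (s t + P t \<omega> \<bullet> Km t)\<^sup>2 * (if s t + P t \<omega> \<bullet> Km t > 0 then 1 else 0) \<partial>M)"
  shows "time_consistent M P s T A gp gm W
           (\<lambda>t x. if x \<ge> W / rho s T t then (x - W / rho s T t) *\<^sub>R Kp t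
                  else (x - W / rho s T t) *\<^sub>R Km t)"
proof -
  \<comment> \<open>first_mom follows from second_mom; absolute continuity, positive definiteness, absence of
    arbitrage and the signs of gp, gm only serve to make the minimisers Kp, Km exist, and here these
    are given.\<close>
  interpret behavioral_policy M P T s W gp gm Kp Km ap am bp bm
  proof (intro behavioral_policy.intro excess_returns.intro excess_returns_axioms.intro
      behavioral_policy_axioms.intro)
    show "\<And>t. t < T \<Longrightarrow> s t \<noteq> 0"
      using s_gt1 by fastforce
  qed (fact prob meas indep second_mom term_a term_b ap_rec am_rec bp_rec bm_rec)+
  have policy_eq: "(\<lambda>t x. if x \<ge> W / rho s T t then (x - W / rho s T t) *\<^sub>R Kp t
      else (x - W / rho s T t) *\<^sub>R Km t) = policy"
    by (simp add: fun_eq_iff policy_def target_def)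
  show ?thesis
    unfolding time_consistent_def policy_eq
  proof (intro allI impI)
    fix t x
    assume "t < T"
    then show "policy t x \<in> cone A \<and> (\<forall>v\<in>cone A. objective t x (policy t x) \<le> objective t x v)"
      using Kp_min Km_min by (intro policy_optimal)
  qed
qed

end
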